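(* Let $f$ and $g$ be transcendental entire functions. If $z_0\in BU(f\circ g)$, then $g(z_0)\in BU(g\circ f)$.
   Context: For an entire function $F$, $F^n$ denotes the $n$-th iterate. The escaping set is $I(F)=\{z: F^n(z)\to\infty\}$, $K(F)=\{z: \exists R>0,\ |F^n(z)|\le R\ \forall n\ge0\}$, and the Bungee set is $BU(F)=\mathbb{C}\setminus(I(F)\cup K(F))$. *)

theory Defs
  imports "HOL-Complex_Analysis.Complex_Analysis" "HOL-Computational_Algebra.Polynomial"
begin

definition transcendental_entire :: "(complex \<Rightarrow> complex) \<Rightarrow> bool" where
  "transcendental_entire F \<longleftrightarrow> F holomorphic_on UNIV \<and> \<not> (\<exists>p. F = poly p)"

definition escaping_set :: "(complex \<Rightarrow> complex) \<Rightarrow> complex set" where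
  "escaping_set F = {z. filterlim (\<lambda>n. (F ^^ n) z) at_infinity sequentially}"

definition bounded_orbit_set :: "(complex \<Rightarrow> complex) \<Rightarrow> complex set" where
  "bounded_orbit_set F = {z. \<exists>R>0. \<forall>n. norm ((F ^^ n) z) \<le> R}"

definition bungee_set :: "(complex \<Rightarrow> complex) \<Rightarrow> complex set" where
  "bungee_set F = UNIV - (escaping_set F \<union> bounded_orbit_set F)"

end

theory Submission
  imports Defs
begin

text \<open>The orbit of \<open>g z\<close> under \<open>g \<circ> f\<close> is the image under \<open>g\<close> of the orbit of \<open>z\<close>
  under \<open>f \<circ> g\<close>, and \<open>f\<close> maps the former onto the latter shifted by one step. Continuous
  maps send bounded sets to bounded sets, so a bounded orbit of \<open>g z\<close> forces a bounded orbit
  of \<open>z\<close>, and an escaping orbit of \<open>g z\<close> forces an escaping orbit of \<open>z\<close>.\<close>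

lemma funpow_comp_swap: "((g \<circ> f) ^^ n) (g z) = g (((f \<circ> g) ^^ n) z)"
  by (induction n) auto

lemma funpow_Suc_comp_swap: "((f \<circ> g) ^^ Suc n) z = f (((g \<circ> f) ^^ n) (g z))"
  by (simp add: funpow_comp_swap funpow_Suc_right)

lemma continuous_on_UNIV_bounded_on_cball:
  fixes h :: "'a::{real_normed_vector,heine_borel} \<Rightarrow> 'b::real_normed_vector"
  assumes "continuous_on UNIV h"
  obtains M where "M > 0" "\<And>x. norm x \<le> R \<Longrightarrow> norm (h x) \<le> M"
proof -
  have "compact (h ` cball 0 R)"
    by (rule compact_continuous_image) (auto intro: continuous_on_subset[OF assms])
  then obtain M where "M > 0" "\<forall>y\<in>h ` cball 0 R. norm y \<le> M"
    using compact_imp_bounded bounded_pos by blast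
  then show thesis
    using that by auto
qed

lemma filterlim_at_infinity_of_continuous_image:
  fixes h :: "'a::{real_normed_vector,heine_borel} \<Rightarrow> 'b::real_normed_vector"
  assumes "continuous_on UNIV h" and "filterlim (\<lambda>n. h (x n)) at_infinity F"
  shows "filterlim x at_infinity F"
  unfolding filterlim_at_infinity[OF order_refl]
proof (intro allI impI)
  fix r :: real
  obtain M where "M > 0" and M: "\<And>y. norm y \<le> r \<Longrightarrow> norm (h y) \<le> M"
    using continuous_on_UNIV_bounded_on_cball[OF assms(1)] by blast
  have "eventually (\<lambda>n. M + 1 \<le> norm (h (x n))) F"
    using assms(2) \<open>M > 0\<close> unfolding filterlim_at_infinity[OF order_refl] by auto
  then show "eventually (\<lambda>n. r \<le> norm (x n)) F"
    by eventually_elim (use M in \<open>smt (verit)\<close>)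
qed

lemma bounded_orbit_set_comp_swap:
  assumes "continuous_on UNIV f" and "g z \<in> bounded_orbit_set (g \<circ> f)"
  shows "z \<in> bounded_orbit_set (f \<circ> g)"
proof -
  obtain R where R: "\<And>n. norm (((g \<circ> f) ^^ n) (g z)) \<le> R"
    using assms(2) unfolding bounded_orbit_set_def by auto
  obtain M where "M > 0" and M: "\<And>x. norm x \<le> R \<Longrightarrow> norm (f x) \<le> M"
    using continuous_on_UNIV_bounded_on_cball[OF assms(1)] by blast
  have "norm (((f \<circ> g) ^^ n) z) \<le> max M (norm z)" for n
  proof (cases n)
    case (Suc m)
    then show ?thesis
      using M[OF R[of m]] by (simp add: funpow_Suc_comp_swap del: funpow.simps)
  qed simp
  then show ?thesis
    unfolding bounded_orbit_set_def using \<open>M > 0\<close>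
    by (intro CollectI exI[of _ "max M (norm z)"]) auto
qed

lemma escaping_set_comp_swap:
  assumes "continuous_on UNIV g" and "g z \<in> escaping_set (g \<circ> f)"
  shows "z \<in> escaping_set (f \<circ> g)"
  using filterlim_at_infinity_of_continuous_image[OF assms(1)] assms(2)
  by (simp add: escaping_set_def funpow_comp_swap)

theorem theorem8:
  fixes f g :: "complex \<Rightarrow> complex" and z0 :: complex
  assumes "transcendental_entire f" and "transcendental_entire g"
    and "z0 \<in> bungee_set (f \<circ> g)"
  shows "g z0 \<in> bungee_set (g \<circ> f)"
proof -
  have "continuous_on UNIV f" and "continuous_on UNIV g"
    using assms(1,2) holomorphic_on_imp_continuous_on
    unfolding transcendental_entire_def by blast+
  then show ?thesis
    using assms(3) bounded_orbit_set_comp_swap escaping_set_comp_swap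
    unfolding bungee_set_def by blast
qed

end
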